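(* Let $\mathbf V$ be a monoid variety satisfying the identities $xyx\approx xyx^2$, $xyx\approx x^2yx$ and $(xy)^2\approx (yx)^2$. If $M_\gamma(x^+tyy^+x^+)\notin\mathbf V$, then $\mathbf V$ satisfies the identity $xty^2x\approx xtxy^2x$.
   Context: Words are elements of the free monoid $\mathfrak X^\ast$ over a countably infinite alphabet $\mathfrak X$. A letter is simple in a word if it occurs exactly once. The congruence $\gamma$ on $\mathfrak X^\ast$: $\mathbf u\mathrel\gamma\mathbf v$ iff $\mathbf u,\mathbf v$ have the same set of simple letters and $\mathbf u$ is obtained from $\mathbf v$ by changing the individual exponents of letters (i.e. $\mathbf u=x_1^{e_1}\cdots x_r^{e_r}$, $\mathbf v=x_1^{f_1}\cdots x_r^{f_r}$ with $e_i,f_i\ge1$). For $\gamma$-classes write $\mathtt v\le\mathtt u$ if $\mathtt u=\mathtt p\mathtt v\mathtt s$ for some $\gamma$-classes $\mathtt p,\mathtt s$. For a set $\mathtt W$ of $\gamma$-classes, $M_\gamma(\mathtt W)$ is the Rees quotient of $\mathfrak X^\ast/\gamma$ by the ideal of $\gamma$-classes not $\le$ any member of $\mathtt W$. With $x^+=\{x^k\mid k\ge1\}$, $x^+tyy^+x^+$ denotes the $\gamma$-class of $xty^2x$, and $M_\gamma(x^+tyy^+x^+)=M_\gamma(\{x^+tyy^+x^+\})$. *)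

theory Defs
  imports "HOL-Algebra.Group"
begin

type_synonym word = "nat list"

definition simple_letters :: "word \<Rightarrow> nat set" where
  "simple_letters w = {x. count_list w x = 1}"

definition gamma_rel :: "word \<Rightarrow> word \<Rightarrow> bool" where
  "gamma_rel u v \<longleftrightarrow> simple_letters u = simple_letters v \<and>
     (\<exists>xs es fs. length es = length xs \<and> length fs = length xs \<and>
        (\<forall>e\<in>set es. e \<ge> 1) \<and> (\<forall>f\<in>set fs. f \<ge> 1) \<and>
        u = concat (map2 (\<lambda>e x. replicate e x) es xs) \<and>
        v = concat (map2 (\<lambda>f x. replicate f x) fs xs))"

definition gclass :: "word \<Rightarrow> word set" where
  "gclass w = {v. gamma_rel v w}"

definition gclasses :: "word set set" where
  "gclasses = range gclass"

text \<open>Product of gamma-classes (gamma is a congruence).\<close>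
definition cmult :: "word set \<Rightarrow> word set \<Rightarrow> word set" where
  "cmult A B = gclass ((SOME a. a \<in> A) @ (SOME b. b \<in> B))"

definition cle :: "word set \<Rightarrow> word set \<Rightarrow> bool" where
  "cle V U \<longleftrightarrow> (\<exists>p\<in>gclasses. \<exists>s\<in>gclasses. U = cmult (cmult p V) s)"

text \<open>Rees quotient M_gamma(W); the zero is None, a class c is Some c.\<close>
definition M_gamma :: "word set set \<Rightarrow> word set option monoid" where
  "M_gamma W = \<lparr> carrier = insert None (Some ` {c \<in> gclasses. \<exists>w\<in>W. cle c w}),
     mult = (\<lambda>a b. case (a, b) of
                (Some c, Some d) \<Rightarrow>
                   (if \<exists>w\<in>W. cle (cmult c d) w then Some (cmult c d) else None)
              | _ \<Rightarrow> None),
     one = Some (gclass []) \<rparr>"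

definition eval_word :: "('a, 'b) monoid_scheme \<Rightarrow> (nat \<Rightarrow> 'a) \<Rightarrow> word \<Rightarrow> 'a" where
  "eval_word M \<phi> w = foldr (\<lambda>x acc. \<phi> x \<otimes>\<^bsub>M\<^esub> acc) w \<one>\<^bsub>M\<^esub>"

definition sat_id :: "('a, 'b) monoid_scheme \<Rightarrow> word \<times> word \<Rightarrow> bool" where
  "sat_id M uv \<longleftrightarrow> (\<forall>\<phi>. range \<phi> \<subseteq> carrier M \<longrightarrow>
                        eval_word M \<phi> (fst uv) = eval_word M \<phi> (snd uv))"

definition subst_word :: "(nat \<Rightarrow> word) \<Rightarrow> word \<Rightarrow> word" where
  "subst_word \<sigma> w = concat (map \<sigma> w)"

text \<open>Monoid varieties correspond (Birkhoff) to equational theories, i.e. fully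
  invariant congruences on the free monoid of countably infinite rank.\<close>
definition equational_theory :: "(word \<times> word) set \<Rightarrow> bool" where
  "equational_theory T \<longleftrightarrow> equiv UNIV T \<and>
     (\<forall>u v p s. (u, v) \<in> T \<longrightarrow> (p @ u @ s, p @ v @ s) \<in> T) \<and>
     (\<forall>u v \<sigma>. (u, v) \<in> T \<longrightarrow> (subst_word \<sigma> u, subst_word \<sigma> v) \<in> T)"

definition in_variety :: "('a, 'b) monoid_scheme \<Rightarrow> (word \<times> word) set \<Rightarrow> bool" where
  "in_variety M T \<longleftrightarrow> (\<forall>uv\<in>T. sat_id M uv)"

end

theory Submission
  imports Defs
begin

(* Write x, t, y for the letters 0, 1, 2 and suppose that T contains the three identities but
   not xtyyx = xtxyyx. Evaluating a word in M_gamma(x+tyy+x+) amounts to substituting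
   representatives and taking the gamma-class of the result, or zero if that is not a factor of
   x+tyy+x+. So it suffices to show that in every identity a = b of T with such a factor a, the
   word b is gamma-related to a.

   The first two identities reduce the exponent of a letter that also occurs elsewhere to 1 and
   every exponent to at most 2, so all words of x+tyy+x+ are T-equal to xtyyx. Each of x = xx,
   xy = yx, xxy = yxx, xyx = yxx and xyx = xxy implies xtyyx = xtxyyx; hence T preserves the
   number of occurrences of each letter up to 2 and, around a simple letter, which letters occur
   before it and which after it. A word w that is T-equal to xtyyx therefore has the form x^m t B
   with B over {x, y}. If B starts with x, the substitution t -> tx turns xtyyx = w into
   xtyyx = xtxyyx; if some x in B is followed by a y, then (yx)^2 = (xy)^2 first moves an x
   directly behind t. So w lies in x+tyy+x+, and comparing a and b inside a context p _ s that
   puts p a s into x+tyy+x+ gives the claim for factors. *)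

lemma count_list_replicate [simp]: "count_list (replicate n x) y = (if x = y then n else 0)"
  by (induction n) auto

lemma replicate_Cons_replicate_eq_iff:
  "x \<noteq> t \<Longrightarrow>
   replicate p x @ t # replicate q x = replicate p' x @ t # replicate q' x \<longleftrightarrow> p = p' \<and> q = q'"
  by (simp add: append_Cons_eq_iff)

lemma split_at_first_in_two_letters:
  assumes "set w \<subseteq> {x, y}" "x \<in> set w"
  obtains n w' where "w = replicate n y @ x # w'"
proof -
  obtain w1 w' where "w = w1 @ x # w'" "x \<notin> set w1"
    using split_list_first[OF assms(2)] by blast
  moreover have "replicate (length w1) y = w1"
    using calculation assms(1) by (intro replicate_length_same) auto
  ultimately show thesis
    using that by metis
qed

lemma infix_of_two_runs:
  assumes "u @ a @ v = replicate m y @ replicate n x"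
  obtains \<beta> \<gamma> where "a = replicate \<beta> y @ replicate \<gamma> x"
proof -
  have "a = take (length a) (drop (length u) (replicate m y @ replicate n x))"
    by (simp flip: assms)
  then show thesis
    by (simp add: drop_append take_append) (rule that)
qed

section \<open>Words up to \<open>\<gamma>\<close>\<close>

lemma remdups_adj_replicate_append:
  "remdups_adj (replicate n x @ w) = (if n = 0 then remdups_adj w else remdups_adj (x # w))"
  by (induction n) (auto simp: remdups_adj_Cons split: list.split)

lemma remdups_adj_remdups_adj [simp]: "remdups_adj (remdups_adj w) = remdups_adj w"
  using distinct_adj_altdef distinct_adj_remdups_adj by blast

lemma remdups_adj_append_remdups_adj:
  "remdups_adj (u @ v) = remdups_adj (remdups_adj u @ remdups_adj v)"
proof -
  have right: "remdups_adj (u @ v) = remdups_adj (u @ remdups_adj v)" for u v :: "'a list"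
    by (induction u) (simp_all add: remdups_adj_Cons)
  have left: "remdups_adj (u @ v) = remdups_adj (remdups_adj u @ v)"
    using right[of "rev v" "rev u"] by (metis remdups_adj_rev rev_append rev_rev_ident)
  show ?thesis
    using left right by metis
qed

lemma remdups_adj_concat_replicate:
  assumes "length es = length xs" "\<forall>e\<in>set es. e \<ge> 1"
  shows "remdups_adj (concat (map2 (\<lambda>e x. replicate e x) es xs)) = remdups_adj xs"
  using assms
proof (induction xs arbitrary: es)
  case (Cons x xs)
  then obtain e es' where "es = e # es'" "e \<ge> 1"
    by (cases es) auto
  with Cons.IH[of es'] Cons.prems show ?case
    by (simp add: remdups_adj_replicate_append remdups_adj_Cons)
qed simp

lemma concat_replicate_remdups_adj:
  "\<exists>es. length es = length (remdups_adj u) \<and> (\<forall>e\<in>set es. e \<ge> 1) \<and>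
        u = concat (map2 (\<lambda>e x. replicate e x) es (remdups_adj u))"
proof (induction u rule: remdups_adj.induct)
  case (2 x)
  show ?case
    by (intro exI[of _ "[1]"]) simp
next
  case (3 x y xs)
  show ?case
  proof (cases "x = y")
    case True
    from "3.IH"(1)[OF True] obtain es where
      es: "length es = length (remdups_adj (x # xs))" "\<forall>e\<in>set es. e \<ge> 1"
      and x_xs: "x # xs = concat (map2 (\<lambda>e x. replicate e x) es (remdups_adj (x # xs)))"
      by blast
    obtain r where r: "remdups_adj (x # xs) = x # r"
      using remdups_adj_Cons'[of x xs] by blast
    obtain e es' where es': "es = e # es'"
      using es(1) r by (cases es) auto
    have rem: "remdups_adj (x # y # xs) = x # r"
      using r True by simp
    have "x # y # xs =
        concat (map2 (\<lambda>e x. replicate e x) (Suc e # es') (remdups_adj (x # y # xs)))"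
      unfolding rem True[symmetric] by (subst x_xs) (simp add: r es')
    moreover have "length (Suc e # es') = length (remdups_adj (x # y # xs))"
      using es(1) es' r rem by simp
    moreover have "\<forall>e\<in>set (Suc e # es'). e \<ge> 1"
      using es(2) es' by simp
    ultimately show ?thesis
      by blast
  next
    case False
    from "3.IH"(2)[OF False] obtain es where
      "length es = length (remdups_adj (y # xs))" "\<forall>e\<in>set es. e \<ge> 1"
        "y # xs = concat (map2 (\<lambda>e x. replicate e x) es (remdups_adj (y # xs)))"
      by blast
    with False show ?thesis
      by (intro exI[of _ "1 # es"]) simp
  qed
qed simp

lemma gamma_rel_iff:
  "gamma_rel u v \<longleftrightarrow> remdups_adj u = remdups_adj v \<and> simple_letters u = simple_letters v"
proof
  assume "gamma_rel u v"
  then show "remdups_adj u = remdups_adj v \<and> simple_letters u = simple_letters v"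
    unfolding gamma_rel_def by (metis remdups_adj_concat_replicate)
next
  assume same: "remdups_adj u = remdups_adj v \<and> simple_letters u = simple_letters v"
  obtain es where "length es = length (remdups_adj u)" "\<forall>e\<in>set es. e \<ge> 1"
    "u = concat (map2 (\<lambda>e x. replicate e x) es (remdups_adj u))"
    using concat_replicate_remdups_adj by blast
  moreover obtain fs where "length fs = length (remdups_adj v)" "\<forall>f\<in>set fs. f \<ge> 1"
    "v = concat (map2 (\<lambda>f x. replicate f x) fs (remdups_adj v))"
    using concat_replicate_remdups_adj by blast
  ultimately show "gamma_rel u v"
    unfolding gamma_rel_def using same by metis
qed

lemma gamma_rel_refl: "gamma_rel u u"
  and gamma_rel_sym: "gamma_rel u v \<Longrightarrow> gamma_rel v u"
  and gamma_rel_trans: "gamma_rel u v \<Longrightarrow> gamma_rel v w \<Longrightarrow> gamma_rel u w"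
  by (simp_all add: gamma_rel_iff)

lemma simple_letters_append:
  "simple_letters (u @ v) = (simple_letters u - set v) \<union> (simple_letters v - set u)"
proof -
  have "x \<in> set w \<longleftrightarrow> count_list w x \<noteq> 0" for w and x :: nat
    by (simp add: count_list_0_iff)
  then show ?thesis
    unfolding simple_letters_def by auto
qed

lemma gamma_rel_append:
  assumes "gamma_rel u u'" "gamma_rel v v'"
  shows "gamma_rel (u @ v) (u' @ v')"
proof -
  have "set u = set u'" "set v = set v'"
    using assms by (metis gamma_rel_iff remdups_adj_set)+
  with assms show ?thesis
    unfolding gamma_rel_iff simple_letters_append
    by (metis remdups_adj_append_remdups_adj)
qed

lemma gclass_eq_iff: "gclass u = gclass v \<longleftrightarrow> gamma_rel u v"
  unfolding gclass_def using gamma_rel_refl gamma_rel_sym gamma_rel_trans by blast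

lemma some_gclass: "gamma_rel (SOME u. u \<in> gclass v) v"
  using someI[of "\<lambda>u. u \<in> gclass v" v] gamma_rel_refl unfolding gclass_def by blast

lemma cmult_gclass: "cmult (gclass u) (gclass v) = gclass (u @ v)"
  unfolding cmult_def gclass_eq_iff by (rule gamma_rel_append[OF some_gclass some_gclass])

section \<open>Factors of the class \<open>x\<^sup>+tyy\<^sup>+x\<^sup>+\<close>\<close>

abbreviation xtyyx :: word where "xtyyx \<equiv> [0,1,2,2,0]"

abbreviation xtxyyx :: word where "xtxyyx \<equiv> [0,1,0,2,2,0]"

definition xtyyx_shaped :: "word \<Rightarrow> bool" where
  "xtyyx_shaped w \<longleftrightarrow>
     (\<exists>i j k. i \<ge> 1 \<and> j \<ge> 2 \<and> k \<ge> 1 \<and> w = replicate i 0 @ 1 # replicate j 2 @ replicate k 0)"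

lemma remdups_adj_xtyx_powers:
  "remdups_adj (replicate \<alpha> 0 @ 1 # replicate \<beta> 2 @ replicate \<gamma> 0) =
   (if \<alpha> = 0 then [] else [0]) @ 1 #
   (if \<beta> = 0 then [] else [2]) @ (if \<gamma> = 0 then [] else [0 :: nat])"
  by (simp add: remdups_adj_replicate_append remdups_adj_Cons remdups_adj_replicate)

lemma remdups_adj_yx_powers:
  "remdups_adj (replicate \<beta> 2 @ replicate \<gamma> 0) =
   (if \<beta> = 0 then [] else [2]) @ (if \<gamma> = 0 then [] else [0 :: nat])"
  by (simp add: remdups_adj_replicate_append remdups_adj_Cons remdups_adj_replicate)

lemma xtyyx_shaped_iff_gamma_rel: "xtyyx_shaped w \<longleftrightarrow> gamma_rel w xtyyx"
proof
  assume "xtyyx_shaped w"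
  then obtain i j k where "i \<ge> 1" "j \<ge> 2" "k \<ge> 1"
    and w: "w = replicate i 0 @ 1 # replicate j 2 @ replicate k 0"
    unfolding xtyyx_shaped_def by blast
  then show "gamma_rel w xtyyx"
    unfolding gamma_rel_iff w remdups_adj_xtyx_powers by (auto simp: simple_letters_def)
next
  assume "gamma_rel w xtyyx"
  then have rem: "remdups_adj w = [0,1,2,0]" and simple: "simple_letters w = {1}"
    unfolding gamma_rel_iff by (auto simp: simple_letters_def)
  obtain es where "length es = length (remdups_adj w)" "\<forall>e\<in>set es. e \<ge> 1"
    "w = concat (map2 (\<lambda>e x. replicate e x) es (remdups_adj w))"
    using concat_replicate_remdups_adj by blast
  then obtain i e j k where "i \<ge> 1" "j \<ge> 1" "k \<ge> 1"
    and w: "w = replicate i 0 @ replicate e 1 @ replicate j 2 @ replicate k 0"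
    unfolding rem by (auto simp: length_Suc_conv)
  have "count_list w 1 = 1" "count_list w 2 \<noteq> 1"
    using simple unfolding simple_letters_def by (simp_all add: set_eq_iff)
  then have "e = 1" "j \<ge> 2"
    using \<open>j \<ge> 1\<close> by (simp_all add: w)
  with \<open>i \<ge> 1\<close> \<open>k \<ge> 1\<close> show "xtyyx_shaped w"
    unfolding xtyyx_shaped_def w by auto
qed

lemma infix_of_xtyyx_shaped:
  assumes "xtyyx_shaped (p @ a @ s)"
  shows "(\<exists>\<alpha> \<beta> \<gamma>. a = replicate \<alpha> 0 @ 1 # replicate \<beta> 2 @ replicate \<gamma> 0) \<or>
         (\<exists>\<beta> \<gamma>. a = replicate \<beta> 2 @ replicate \<gamma> 0)"
proof -
  obtain i j k where w: "replicate i 0 @ 1 # (replicate j 2 @ replicate k 0) = p @ a @ s"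
    using assms unfolding xtyyx_shaped_def by auto
  note split_at_t =
    append_Cons_eq_iff[of 1 "replicate i 0" "replicate j 2 @ replicate k 0", simplified]
  have "1 \<in> set (p @ a @ s)"
    unfolding w[symmetric] by simp
  then consider (in_a) "1 \<in> set a" | (in_p) "1 \<in> set p" | (in_s) "1 \<in> set s"
    by auto
  then show ?thesis
  proof cases
    case in_a
    then obtain a1 a2 where a: "a = a1 @ 1 # a2"
      by (meson split_list)
    then have "replicate i 0 = p @ a1" and right: "replicate j 2 @ replicate k 0 = [] @ a2 @ s"
      using w split_at_t[of "p @ a1" "a2 @ s"] by auto
    then have "a1 = replicate (length a1) 0"
      by (metis in_set_conv_decomp in_set_replicate replicate_length_same append.assoc)
    moreover obtain \<beta> \<gamma> where "a2 = replicate \<beta> 2 @ replicate \<gamma> 0"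
      using infix_of_two_runs[OF right[symmetric]] by blast
    ultimately show ?thesis
      using a by blast
  next
    case in_p
    then obtain p1 p2 where "p = p1 @ 1 # p2"
      by (meson split_list)
    then have "p2 @ a @ s = replicate j 2 @ replicate k 0"
      using w split_at_t[of p1 "p2 @ a @ s"] by auto
    then show ?thesis
      by (meson infix_of_two_runs)
  next
    case in_s
    then obtain s1 s2 where "s = s1 @ 1 # s2"
      by (meson split_list)
    then have "p @ a @ s1 = replicate 0 2 @ replicate i 0"
      using w split_at_t[of "p @ a @ s1" s2] by auto
    then show ?thesis
      by (meson infix_of_two_runs)
  qed
qed

definition xtyyx_factor :: "word \<Rightarrow> bool" where
  "xtyyx_factor a \<longleftrightarrow> (\<exists>p s. xtyyx_shaped (p @ a @ s))"

lemma xtyyx_factor_Nil: "xtyyx_factor []"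
proof -
  have "xtyyx_shaped ([] @ [] @ xtyyx)"
    unfolding xtyyx_shaped_def
    by (rule exI[of _ 1], rule exI[of _ 2], rule exI[of _ 1]) (simp add: numeral_eq_Suc)
  then show ?thesis
    unfolding xtyyx_factor_def by blast
qed

lemma xtyyx_factor_appendD: "xtyyx_factor (u @ v) \<Longrightarrow> xtyyx_factor v"
  unfolding xtyyx_factor_def by (metis append.assoc)

lemma xtyyx_factor_letters:
  assumes "xtyyx_factor u"
  shows "set u \<subseteq> {0, 1, 2}"
proof -
  obtain p s i j k where w: "p @ u @ s = replicate i 0 @ 1 # replicate j 2 @ replicate k 0"
    using assms unfolding xtyyx_factor_def xtyyx_shaped_def by blast
  have "set u \<subseteq> set (p @ u @ s)"
    by auto
  also have "\<dots> \<subseteq> {0, 1, 2}"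
    unfolding w by (auto simp: set_replicate_conv_if)
  finally show ?thesis .
qed

lemma cle_gclass_xtyyx_iff: "cle (gclass a) (gclass xtyyx) \<longleftrightarrow> xtyyx_factor a"
proof -
  have "cle (gclass a) (gclass xtyyx) \<longleftrightarrow> (\<exists>p s. gclass xtyyx = gclass (p @ a @ s))"
    unfolding cle_def gclasses_def by (auto simp: cmult_gclass)
  also have "\<dots> \<longleftrightarrow> xtyyx_factor a"
    unfolding xtyyx_factor_def xtyyx_shaped_iff_gamma_rel gclass_eq_iff
    using gamma_rel_sym by blast
  finally show ?thesis .
qed

lemma xtyyx_factor_gamma_rel: "gamma_rel u v \<Longrightarrow> xtyyx_factor u \<longleftrightarrow> xtyyx_factor v"
  by (metis cle_gclass_xtyyx_iff gclass_eq_iff)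

section \<open>Equational theories\<close>

lemma subst_word_simps [simp]:
  "subst_word \<sigma> [] = []"
  "subst_word \<sigma> (x # w) = \<sigma> x @ subst_word \<sigma> w"
  "subst_word \<sigma> (u @ v) = subst_word \<sigma> u @ subst_word \<sigma> v"
  by (simp_all add: subst_word_def)

lemma subst_word_replicate [simp]:
  "subst_word \<sigma> (replicate n x) = concat (replicate n (\<sigma> x))"
  by (induction n) auto

lemma subst_word_id: "(\<And>c. c \<in> set w \<Longrightarrow> \<sigma> c = [c]) \<Longrightarrow> subst_word \<sigma> w = w"
  by (induction w) auto

lemma subst_word_project_letter:
  "subst_word (\<lambda>c. if c = z then [y] else []) w = replicate (count_list w z) y"
  by (induction w) (auto simp flip: replicate_add)

lemma subst_word_project_two_letters:
  "t \<notin> set w \<Longrightarrow>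
   subst_word (\<lambda>c. if c = t then u else if c = z then [y] else []) w =
   replicate (count_list w z) y"
  by (induction w) (auto simp flip: replicate_add)

locale eq_theory =
  fixes T :: "(word \<times> word) set"
  assumes equational: "equational_theory T"
begin

abbreviation equiv_T :: "word \<Rightarrow> word \<Rightarrow> bool" (infix "\<approx>" 50)
  where "u \<approx> v \<equiv> (u, v) \<in> T"

lemma equiv_refl [simp]: "u \<approx> u"
  using equational unfolding equational_theory_def equiv_def refl_on_def by blast

lemma equiv_sym: "u \<approx> v \<Longrightarrow> v \<approx> u"
  using equational unfolding equational_theory_def equiv_def sym_def by blast

lemma equiv_trans [trans]: "u \<approx> v \<Longrightarrow> v \<approx> w \<Longrightarrow> u \<approx> w"
  using equational unfolding equational_theory_def equiv_def trans_def by blast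

lemma equiv_context: "u \<approx> v \<Longrightarrow> p @ u @ s \<approx> p @ v @ s"
  using equational unfolding equational_theory_def by blast

lemma equiv_subst: "u \<approx> v \<Longrightarrow> subst_word \<sigma> u \<approx> subst_word \<sigma> v"
  using equational unfolding equational_theory_def by blast

lemma equiv_count_letter:
  "u \<approx> v \<Longrightarrow> replicate (count_list u z) z \<approx> replicate (count_list v z) z"
  using equiv_subst[of u v "\<lambda>c. if c = z then [z] else []"]
  by (simp only: subst_word_project_letter)

lemma equiv_project_two_letters:
  assumes "A @ t # B \<approx> C @ t # D" "t \<notin> set A \<union> set B \<union> set C \<union> set D"
  shows "replicate (count_list A z) 0 @ 1 # replicate (count_list B z) 0 \<approx>
         replicate (count_list C z) 0 @ 1 # replicate (count_list D z) 0"
  using equiv_subst[OF assms(1), of "\<lambda>c. if c = t then [1] else if c = z then [0] else []"]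
    assms(2) by (simp add: subst_word_project_two_letters)

end

section \<open>Consequences of \<open>xyx \<approx> xyxx\<close>, \<open>xyx \<approx> xxyx\<close> and \<open>xyxy \<approx> yxyx\<close>\<close>

definition xtx_normal_form :: "nat \<Rightarrow> nat \<Rightarrow> word" where
  "xtx_normal_form a b =
     replicate (if b = 0 then min a 2 else min a 1) 0 @ 1 #
     replicate (if a = 0 then min b 2 else min b 1) 0"

lemma xtx_normal_form_cases:
  "xtx_normal_form a b \<in> {[1], [0,1], [1,0], [0,0,1], [0,1,0], [1,0,0]}"
proof -
  have "a = 0 \<or> a = 1 \<or> a \<ge> 2" "b = 0 \<or> b = 1 \<or> b \<ge> 2"
    by auto
  then show ?thesis
    by (elim disjE) (auto simp: xtx_normal_form_def min_def numeral_eq_Suc)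
qed

lemma count_xtx_normal_form: "count_list (xtx_normal_form a b) 0 = min (a + b) 2"
  by (auto simp: xtx_normal_form_def min_def)

lemma xtx_normal_form_eqD:
  assumes "xtx_normal_form a b = xtx_normal_form c d"
  shows "(a = 0 \<longleftrightarrow> c = 0) \<and> (b = 0 \<longleftrightarrow> d = 0)"
  using assms unfolding xtx_normal_form_def
  by (auto simp: replicate_Cons_replicate_eq_iff split: if_splits)

locale aperiodic_theory = eq_theory +
  assumes xyx_xyxx_letters: "([0,1,0], [0,1,0,0]) \<in> T"
    and xyx_xxyx_letters: "([0,1,0], [0,0,1,0]) \<in> T"
    and xyxy_yxyx_letters: "([0,1,0,1], [1,0,1,0]) \<in> T"
begin

lemma xyx_xyxx: "x @ y @ x \<approx> x @ y @ x @ x"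
  using equiv_subst[OF xyx_xyxx_letters, of "\<lambda>c. if c = 0 then x else y"] by simp

lemma xyx_xxyx: "x @ y @ x \<approx> x @ x @ y @ x"
  using equiv_subst[OF xyx_xxyx_letters, of "\<lambda>c. if c = 0 then x else y"] by simp

lemma xyxy_yxyx: "x @ y @ x @ y \<approx> y @ x @ y @ x"
  using equiv_subst[OF xyxy_yxyx_letters, of "\<lambda>c. if c = 0 then x else y"] by simp

lemma equiv_power_recurring:
  assumes "e \<ge> 1" "z \<in> set p \<union> set s"
  shows "p @ replicate e z @ s \<approx> p @ [z] @ s"
proof -
  have step: "p @ replicate (Suc (Suc n)) z @ s \<approx> p @ replicate (Suc n) z @ s" for n
  proof (cases "z \<in> set p")
    case True
    then obtain p1 p2 where "p = p1 @ z # p2"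
      by (meson split_list)
    then show ?thesis
      using equiv_context[OF xyx_xyxx[of "[z]" "p2 @ replicate n z"], of p1 s]
      by (simp add: replicate_app_Cons_same equiv_sym)
  next
    case False
    with assms(2) obtain s1 s2 where "s = s1 @ z # s2"
      by (meson UnE split_list)
    then show ?thesis
      using equiv_context[OF xyx_xxyx[of "[z]" "replicate n z @ s1"], of p s2]
      by (simp add: equiv_sym)
  qed
  have "p @ replicate (Suc n) z @ s \<approx> p @ [z] @ s" for n
  proof (induction n)
    case (Suc n)
    show ?case
      using equiv_trans[OF step Suc.IH] .
  qed simp
  moreover have "e = Suc (e - 1)"
    using assms(1) by simp
  ultimately show ?thesis
    by metis
qed

lemma equiv_power_square:
  assumes "e \<ge> 2"
  shows "p @ replicate e z @ s \<approx> p @ [z, z] @ s"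
proof -
  have e: "e = Suc (Suc (e - 2))"
    using assms by simp
  show ?thesis
    using equiv_power_recurring[of "Suc (e - 2)" z "p @ [z]" s] by (subst e) simp
qed

lemma equiv_power_min2: "p @ replicate k z @ s \<approx> p @ replicate (min k 2) z @ s"
  using equiv_power_square[of k p z s] by (cases "k \<ge> 2") (auto simp: min_def numeral_eq_Suc)

lemma xtyyx_shaped_equiv:
  assumes "xtyyx_shaped w"
  shows "w \<approx> xtyyx"
proof -
  obtain i j k where ijk: "i \<ge> 1" "j \<ge> 2" "k \<ge> 1"
    and w: "w = replicate i 0 @ 1 # replicate j 2 @ replicate k 0"
    using assms unfolding xtyyx_shaped_def by blast
  have "w \<approx> [0,1] @ replicate j 2 @ replicate k 0"
    using equiv_power_recurring[of i 0 "[]" "1 # replicate j 2 @ replicate k 0"] ijk w by simp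
  also have "[0,1] @ replicate j 2 @ replicate k 0 \<approx> [0,1,2,2] @ replicate k 0"
    using equiv_power_square[of j "[0,1]" 2 "replicate k 0"] ijk by simp
  also have "[0,1,2,2] @ replicate k 0 \<approx> xtyyx"
    using equiv_power_recurring[of k 0 "[0,1,2,2]" "[]"] ijk by simp
  finally show ?thesis .
qed

lemma equiv_xtx_normal_form: "replicate a 0 @ 1 # replicate b 0 \<approx> xtx_normal_form a b"
proof (cases "a = 0 \<or> b = 0")
  case True
  then show ?thesis
    using equiv_power_min2[of "[1]" b 0 "[]"] equiv_power_min2[of "[]" a 0 "[1]"]
    by (auto simp: xtx_normal_form_def)
next
  case False
  have "replicate a 0 @ 1 # replicate b 0 \<approx> [0] @ 1 # replicate b 0"
    using equiv_power_recurring[of a 0 "[]" "1 # replicate b 0"] False by simp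
  also have "[0] @ 1 # replicate b 0 \<approx> [0,1,0]"
    using equiv_power_recurring[of b 0 "[0,1]" "[]"] False by simp
  finally show ?thesis
    using False by (simp add: xtx_normal_form_def)
qed

lemma xtyyx_xtxyyx_if_xxy_yxx:
  assumes "[0,0,1] \<approx> [1,0,0]"
  shows "xtyyx \<approx> xtxyyx"
proof -
  have "xtyyx \<approx> [0,0,1,2,2,0]"
    using equiv_power_recurring[of 2 0 "[]" "[1,2,2,0]"] by (simp add: numeral_eq_Suc equiv_sym)
  also have "[0,0,1,2,2,0] \<approx> [0,0,0,1,2,2,0]"
    using equiv_power_square[of 3 "[]" 0 "[1,2,2,0]"] by (simp add: numeral_eq_Suc equiv_sym)
  also have "[0,0,0,1,2,2,0] \<approx> [0,1,0,0,2,2,0]"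
    using equiv_context[OF assms, of "[0]" "[2,2,0]"] by simp
  also have "[0,1,0,0,2,2,0] \<approx> xtxyyx"
    using equiv_power_recurring[of 2 0 "[0,1]" "[2,2,0]"] by (simp add: numeral_eq_Suc)
  finally show ?thesis .
qed

lemma xtyyx_xtxyyx_if_xy_yx:
  assumes "[0,1] \<approx> [1,0]"
  shows "xtyyx \<approx> xtxyyx"
proof -
  have "[0,0,1] \<approx> [0,1,0]"
    using equiv_context[OF assms, of "[0]" "[]"] by simp
  also have "[0,1,0] \<approx> [1,0,0]"
    using equiv_context[OF assms, of "[]" "[0]"] by simp
  finally show ?thesis
    by (rule xtyyx_xtxyyx_if_xxy_yxx)
qed

lemma xtyyx_xtxyyx_if_x_xx:
  assumes "[0] \<approx> [0,0]"
  shows "xtyyx \<approx> xtxyyx"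
proof -
  have "[0,1] \<approx> [0,1,0,1]"
    using equiv_subst[OF assms, of "\<lambda>_. [0,1]"] by simp
  also have "[0,1,0,1] \<approx> [1,0,1,0]"
    by (rule xyxy_yxyx_letters)
  also have "[1,0,1,0] \<approx> [1,0]"
    using equiv_subst[OF assms, of "\<lambda>_. [1,0]"] by (simp add: equiv_sym)
  finally show ?thesis
    by (rule xtyyx_xtxyyx_if_xy_yx)
qed

lemma xtyyx_xtxyyx_if_powers:
  assumes "replicate m z \<approx> replicate n z" "min m 2 < min n 2"
  shows "xtyyx \<approx> xtxyyx"
proof -
  have reduce: "replicate k 0 \<approx> replicate (min k 2) 0" for k
    using equiv_power_min2[of "[]" k 0 "[]"] by simp
  define i j where "i = min m 2" and "j = min n 2"
  have "i < j" "j \<le> 2"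
    using assms(2) by (simp_all add: i_def j_def)
  have "replicate m 0 \<approx> replicate n 0"
    using equiv_subst[OF assms(1), of "\<lambda>_. [0]"] by simp
  then have "replicate i 0 \<approx> replicate j 0"
    unfolding i_def j_def using reduce equiv_sym equiv_trans by meson
  then have "replicate (1 - i) 0 @ replicate i 0 @ [] \<approx> replicate (1 - i) 0 @ replicate j 0 @ []"
    by (rule equiv_context)
  then have "[0] \<approx> replicate (1 - i + j) 0"
    using \<open>i < j\<close> \<open>j \<le> 2\<close> by (simp flip: replicate_add)
  also have "replicate (1 - i + j) 0 \<approx> [0,0]"
    using equiv_power_square[of "1 - i + j" "[]" 0 "[]"] \<open>i < j\<close> by simp
  finally show ?thesis
    by (rule xtyyx_xtxyyx_if_x_xx)
qed

lemma xtyyx_xtxyyx_if_xyx_yxx: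
  assumes "[0,1,0] \<approx> [1,0,0]"
  shows "xtyyx \<approx> xtxyyx"
proof -
  let ?\<sigma> = "\<lambda>y c. if c = 0 then [0] else y"
  have "xtyyx \<approx> [1,2,2,0,0]"
    using equiv_subst[OF assms, of "?\<sigma> [1,2,2]"] by simp
  also have "[1,2,2,0,0] \<approx> [1,2,2,0,0,0]"
    using equiv_power_square[of 3 "[1,2,2]" 0 "[]"] by (simp add: numeral_eq_Suc equiv_sym)
  also have "[1,2,2,0,0,0] \<approx> [1,0,2,2,0,0]"
    using equiv_context[OF equiv_subst[OF assms, of "?\<sigma> [2,2]"], of "[1]" "[0]"]
    by (simp add: equiv_sym)
  also have "[1,0,2,2,0,0] \<approx> xtxyyx"
    using equiv_subst[OF assms, of "?\<sigma> [1,0,2,2]"] by (simp add: equiv_sym)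
  finally show ?thesis .
qed

lemma xtyyx_xtxyyx_if_xyx_xxy:
  assumes "[0,1,0] \<approx> [0,0,1]"
  shows "xtyyx \<approx> xtxyyx"
proof -
  let ?\<sigma> = "\<lambda>y c. if c = 0 then [0] else y"
  have "xtyyx \<approx> [0,0,1,2,2]"
    using equiv_subst[OF assms, of "?\<sigma> [1,2,2]"] by simp
  also have "[0,0,1,2,2] \<approx> [0,0,0,1,2,2]"
    using equiv_power_square[of 3 "[]" 0 "[1,2,2]"] by (simp add: numeral_eq_Suc equiv_sym)
  also have "[0,0,0,1,2,2] \<approx> [0,0,1,0,2,2]"
    using equiv_context[OF assms, of "[0]" "[2,2]"] by (simp add: equiv_sym)
  also have "[0,0,1,0,2,2] \<approx> xtxyyx"
    using equiv_subst[OF assms, of "?\<sigma> [1,0,2,2]"] by (simp add: equiv_sym)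
  finally show ?thesis .
qed

lemma xtyyx_xtxyyx_if_rearranged:
  assumes "u \<approx> v" "u \<noteq> v" "count_list u 0 = count_list v 0"
    and "u \<in> {[1], [0,1], [1,0], [0,0,1], [0,1,0], [1,0,0]}"
    and "v \<in> {[1], [0,1], [1,0], [0,0,1], [0,1,0], [1,0,0]}"
  shows "xtyyx \<approx> xtxyyx"
proof -
  let ?P = "{([0,1], [1,0]), ([0,0,1], [1,0,0]), ([0,1,0], [1,0,0]), ([0,1,0], [0,0,1])}
    :: (word \<times> word) set"
  have "(u, v) \<in> ?P \<or> (v, u) \<in> ?P"
    using assms(4,5) unfolding insert_iff empty_iff by (elim disjE; use assms(2,3) in simp)
  moreover have "xtyyx \<approx> xtxyyx" if "(u', v') \<in> ?P" "u' \<approx> v'" for u' v'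
    using that xtyyx_xtxyyx_if_xy_yx xtyyx_xtxyyx_if_xxy_yxx xtyyx_xtxyyx_if_xyx_yxx
      xtyyx_xtxyyx_if_xyx_xxy
    by auto
  ultimately show ?thesis
    using assms(1) equiv_sym by blast
qed

lemma xtyyx_xtxyyx_if_t_followed_by_x:
  assumes "xtyyx \<approx> A @ 1 # 0 # B" "0 \<in> set A" "1 \<notin> set A" "1 \<notin> set B"
  shows "xtyyx \<approx> xtxyyx"
proof -
  let ?\<sigma> = "\<lambda>c. if c = 1 then [1,0] else [c]"
  have "subst_word ?\<sigma> A = A" "subst_word ?\<sigma> B = B"
    using assms(3,4) by (auto intro: subst_word_id)
  then have "xtxyyx \<approx> (A @ [1]) @ replicate 2 0 @ B"
    using equiv_subst[OF assms(1), of ?\<sigma>] by (simp add: numeral_eq_Suc)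
  also have "(A @ [1]) @ replicate 2 0 @ B \<approx> (A @ [1]) @ [0] @ B"
    using equiv_power_recurring[of 2 0 "A @ [1]" B] assms(2) by (simp add: numeral_eq_Suc)
  also have "(A @ [1]) @ [0] @ B \<approx> xtyyx"
    using assms(1) by (simp add: equiv_sym)
  finally show ?thesis
    by (rule equiv_sym)
qed

lemma xtyyx_xtxyyx_if_y_recurs_after_x:
  assumes "xtyyx \<approx> A @ 1 # replicate b 2 @ replicate c 0 @ 2 # R"
    and "b \<ge> 1" "c \<ge> 1" "0 \<in> set A" "1 \<notin> set A" "set R \<subseteq> {0, 2}"
  shows "xtyyx \<approx> xtxyyx"
proof -
  obtain d R' where R': "R @ [0] = replicate d 2 @ 0 # R'"
    using split_at_first_in_two_letters[of "R @ [0]" 0 2] assms(6) by auto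
  have "set (replicate d 2 @ 0 # R') \<subseteq> {0, 2}"
    using assms(6) unfolding R'[symmetric] by auto
  then have "1 \<notin> set R'"
    by auto
  have "xtyyx \<approx> xtyyx @ [0]"
    using equiv_power_recurring[of 2 0 "[0,1,2,2]" "[]"] by (simp add: numeral_eq_Suc equiv_sym)
  also have "xtyyx @ [0] \<approx> (A @ [1]) @ replicate b 2 @ (replicate c 0 @ 2 # R @ [0])"
    using equiv_context[OF assms(1), of "[]" "[0]"] by simp
  also have "(A @ [1]) @ replicate b 2 @ (replicate c 0 @ 2 # R @ [0]) \<approx>
      (A @ [1,2]) @ replicate c 0 @ (2 # R @ [0])"
    using equiv_power_recurring[of b 2 "A @ [1]" "replicate c 0 @ 2 # R @ [0]"] assms(2) by simp
  also have "(A @ [1,2]) @ replicate c 0 @ (2 # R @ [0]) \<approx>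
      (A @ [1,2,0]) @ replicate (Suc d) 2 @ 0 # R'"
    using equiv_power_recurring[of c 0 "A @ [1,2]" "2 # R @ [0]"] assms(3,4) R' by simp
  also have "(A @ [1,2,0]) @ replicate (Suc d) 2 @ 0 # R' \<approx> (A @ [1]) @ [2,0,2,0] @ R'"
    using equiv_power_recurring[of "Suc d" 2 "A @ [1,2,0]" "0 # R'"] by simp
  also have "(A @ [1]) @ [2,0,2,0] @ R' \<approx> A @ 1 # 0 # [2,0,2] @ R'"
    using equiv_context[OF xyxy_yxyx[of "[2]" "[0]"], of "A @ [1]" R'] by simp
  finally show ?thesis
    by (rule xtyyx_xtxyyx_if_t_followed_by_x) (use assms(4,5) \<open>1 \<notin> set R'\<close> in auto)
qed

end

section \<open>Theories in which \<open>xtyyx \<approx> xtxyyx\<close> fails\<close>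

locale xtyyx_xtxyyx_fails = aperiodic_theory +
  assumes not_xtyyx_xtxyyx: "\<not> xtyyx \<approx> xtxyyx"
begin

lemma min_count_equiv:
  assumes "u \<approx> v"
  shows "min (count_list u z) 2 = min (count_list v z) 2"
  using xtyyx_xtxyyx_if_powers[OF equiv_count_letter[OF assms]]
    xtyyx_xtxyyx_if_powers[OF equiv_count_letter[OF equiv_sym[OF assms]]] not_xtyyx_xtxyyx
  by (meson linorder_neqE_nat)

lemma set_equiv:
  assumes "u \<approx> v"
  shows "z \<in> set u \<longleftrightarrow> z \<in> set v"
proof -
  have "count_list u z = 0 \<longleftrightarrow> count_list v z = 0"
    using min_count_equiv[OF assms, of z] by (simp add: min_def split: if_splits)
  then show ?thesis
    by (simp add: count_list_0_iff)
qed

lemma simple_letters_equiv: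
  assumes "u \<approx> v"
  shows "simple_letters u = simple_letters v"
proof -
  have "count_list u z = 1 \<longleftrightarrow> count_list v z = 1" for z
    using min_count_equiv[OF assms, of z] by (simp add: min_def split: if_splits)
  then show ?thesis
    by (simp add: simple_letters_def)
qed

lemma xtx_pattern_equiv:
  assumes "replicate a 0 @ 1 # replicate b 0 \<approx> replicate c 0 @ 1 # replicate d 0"
  shows "(a = 0 \<longleftrightarrow> c = 0) \<and> (b = 0 \<longleftrightarrow> d = 0)"
proof -
  have "xtx_normal_form a b \<approx> xtx_normal_form c d"
    using equiv_xtx_normal_form assms equiv_sym equiv_trans by meson
  moreover have "count_list (xtx_normal_form a b) 0 = count_list (xtx_normal_form c d) 0"
    using min_count_equiv[OF assms, of 0] by (simp add: count_xtx_normal_form)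
  ultimately have "xtx_normal_form a b = xtx_normal_form c d"
    using xtyyx_xtxyyx_if_rearranged xtx_normal_form_cases not_xtyyx_xtxyyx by blast
  then show ?thesis
    by (rule xtx_normal_form_eqD)
qed

lemma set_around_simple_letter_equiv:
  assumes "A @ t # B \<approx> C @ t # D" "t \<notin> set A \<union> set B \<union> set C \<union> set D"
  shows "(z \<in> set A \<longleftrightarrow> z \<in> set C) \<and> (z \<in> set B \<longleftrightarrow> z \<in> set D)"
  using xtx_pattern_equiv[OF equiv_project_two_letters[OF assms, of z]]
  by (simp add: count_list_0_iff)

lemma xtyyx_isoterm:
  assumes "xtyyx \<approx> w"
  shows "xtyyx_shaped w"
proof -
  have "count_list w 1 = 1" and count2: "count_list w 2 \<ge> 2"
    using min_count_equiv[OF assms, of 1] min_count_equiv[OF assms, of 2]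
    by (simp_all add: min_def split: if_splits)
  then obtain A B where w: "w = A @ 1 # B" "1 \<notin> set A" "1 \<notin> set B"
    using count_list_Suc_split_first[of w 1 0] by (auto simp: count_list_0_iff)
  have "(z \<in> set [0] \<longleftrightarrow> z \<in> set A) \<and> (z \<in> set [2,2,0] \<longleftrightarrow> z \<in> set B)" for z
    by (rule set_around_simple_letter_equiv[of "[0]" 1 "[2,2,0]"]) (use assms w in auto)
  then have set_A: "set A = {0}" and set_B: "set B = {0, 2}"
    by auto
  have "replicate (length A) 0 = A"
    using set_A by (intro replicate_length_same) auto
  moreover have "length A \<ge> 1"
    using set_A by (cases A) auto
  ultimately obtain m where A: "A = replicate m 0" "m \<ge> 1"
    by metis
  obtain b B' where B: "B = replicate b 2 @ 0 # B'"
    using split_at_first_in_two_letters[of B 0 2] set_B by auto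
  have set_B': "set B' \<subseteq> {0, 2}"
    using set_B unfolding B by (metis Un_upper2 set_append set_subset_Cons subset_trans)
  have "b \<ge> 1"
  proof (rule ccontr)
    assume "\<not> b \<ge> 1"
    then have "B = 0 # B'"
      using B by simp
    then have "xtyyx \<approx> A @ 1 # 0 # B'"
      using assms w by simp
    then show False
      using xtyyx_xtxyyx_if_t_followed_by_x not_xtyyx_xtxyyx set_A w(2,3) B by auto
  qed
  show ?thesis
  proof (cases "2 \<in> set B'")
    case True
    then obtain c R where "B' = replicate c 0 @ 2 # R"
      using split_at_first_in_two_letters[of B' 2 0] set_B' by auto
    with assms w B have equiv: "xtyyx \<approx> A @ 1 # replicate b 2 @ replicate (Suc c) 0 @ 2 # R"
      by simp
    have "set R \<subseteq> {0, 2}"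
      using set_B' \<open>B' = replicate c 0 @ 2 # R\<close> by auto
    then have "xtyyx \<approx> xtxyyx"
      by (intro xtyyx_xtxyyx_if_y_recurs_after_x[OF equiv]) (use \<open>b \<ge> 1\<close> set_A w(2) in auto)
    with not_xtyyx_xtxyyx show ?thesis
      by contradiction
  next
    case False
    then have "B' = replicate (length B') 0"
      using set_B' by (metis empty_iff insertE replicate_length_same subsetD)
    then have w': "w = replicate m 0 @ 1 # replicate b 2 @ replicate (Suc (length B')) 0"
      using w(1) A B by (metis replicate_Suc replicate_app_Cons_same)
    moreover have "b \<ge> 2"
      using count2 unfolding w' by simp
    ultimately show ?thesis
      unfolding xtyyx_shaped_def using A(2)
      by (intro exI[of _ m] exI[of _ b] exI[of _ "Suc (length B')"]) simp
  qed
qed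

lemma xtyyx_factor_isoterm:
  assumes "a \<approx> b" "xtyyx_factor a"
  shows "gamma_rel a b"
proof -
  obtain p s where shaped_a: "xtyyx_shaped (p @ a @ s)"
    using assms(2) unfolding xtyyx_factor_def by blast
  have "xtyyx \<approx> p @ b @ s"
    using xtyyx_shaped_equiv[OF shaped_a] equiv_context[OF assms(1)] equiv_sym equiv_trans
    by meson
  then have shaped_b: "xtyyx_shaped (p @ b @ s)"
    by (rule xtyyx_isoterm)
  have "remdups_adj a = remdups_adj b"
  proof (cases "1 \<in> set a")
    case True
    then have "1 \<in> set b"
      using set_equiv[OF assms(1)] by blast
    obtain \<alpha> \<beta> \<gamma> where a: "a = replicate \<alpha> 0 @ 1 # replicate \<beta> 2 @ replicate \<gamma> 0"
      using infix_of_xtyyx_shaped[OF shaped_a] True by auto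
    obtain \<alpha>' \<beta>' \<gamma>' where b: "b = replicate \<alpha>' 0 @ 1 # replicate \<beta>' 2 @ replicate \<gamma>' 0"
      using infix_of_xtyyx_shaped[OF shaped_b] \<open>1 \<in> set b\<close> by auto
    have "(z \<in> set (replicate \<alpha> 0) \<longleftrightarrow> z \<in> set (replicate \<alpha>' 0)) \<and>
          (z \<in> set (replicate \<beta> 2 @ replicate \<gamma> 0) \<longleftrightarrow>
           z \<in> set (replicate \<beta>' 2 @ replicate \<gamma>' 0))" for z :: nat
      by (rule set_around_simple_letter_equiv) (use assms(1) a b in auto)
    from this[of 0] this[of 2] have "\<alpha> = 0 \<longleftrightarrow> \<alpha>' = 0" "\<beta> = 0 \<longleftrightarrow> \<beta>' = 0" "\<gamma> = 0 \<longleftrightarrow> \<gamma>' = 0"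
      by auto
    then show ?thesis
      unfolding a b remdups_adj_xtyx_powers by simp
  next
    case False
    then have "1 \<notin> set b"
      using set_equiv[OF assms(1)] by blast
    obtain \<beta> \<gamma> where a: "a = replicate \<beta> 2 @ replicate \<gamma> 0"
      using infix_of_xtyyx_shaped[OF shaped_a] False by auto
    obtain \<beta>' \<gamma>' where b: "b = replicate \<beta>' 2 @ replicate \<gamma>' 0"
      using infix_of_xtyyx_shaped[OF shaped_b] \<open>1 \<notin> set b\<close> by auto
    have "\<beta> = 0 \<longleftrightarrow> \<beta>' = 0" "\<gamma> = 0 \<longleftrightarrow> \<gamma>' = 0"
      using set_equiv[OF assms(1), of 2] set_equiv[OF assms(1), of 0] unfolding a b by auto
    then show ?thesis
      unfolding a b remdups_adj_yx_powers by simp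
  qed
  then show ?thesis
    unfolding gamma_rel_iff using simple_letters_equiv[OF assms(1)] by simp
qed

end

section \<open>The monoid \<open>M\<^sub>\<gamma>(x\<^sup>+tyy\<^sup>+x\<^sup>+)\<close>\<close>

abbreviation M_xtyyx :: "word set option monoid" where
  "M_xtyyx \<equiv> M_gamma {gclass xtyyx}"

definition rees_class :: "word \<Rightarrow> word set option" where
  "rees_class w = (if xtyyx_factor w then Some (gclass w) else None)"

lemma M_xtyyx_mult_Some:
  "Some (gclass u) \<otimes>\<^bsub>M_xtyyx\<^esub> Some (gclass v) = rees_class (u @ v)"
  by (simp add: M_gamma_def rees_class_def cmult_gclass cle_gclass_xtyyx_iff del: One_nat_def)

lemma M_xtyyx_mult_None:
  "None \<otimes>\<^bsub>M_xtyyx\<^esub> y = None" "y \<otimes>\<^bsub>M_xtyyx\<^esub> None = None"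
  by (simp_all add: M_gamma_def split: option.split)

text \<open>The zero \<^term>\<open>None\<close> is represented by the letter 3, which occurs in no factor of
  \<^term>\<open>xtyyx\<close>.\<close>

definition class_rep :: "(nat \<Rightarrow> word set option) \<Rightarrow> nat \<Rightarrow> word" where
  "class_rep \<phi> z = (case \<phi> z of None \<Rightarrow> [3] | Some c \<Rightarrow> (SOME u. u \<in> c))"

lemma eval_word_M_xtyyx:
  assumes "range \<phi> \<subseteq> carrier M_xtyyx"
  shows "eval_word M_xtyyx \<phi> w = rees_class (subst_word (class_rep \<phi>) w)"
proof (induction w)
  case Nil
  show ?case
    using xtyyx_factor_Nil by (simp add: eval_word_def M_gamma_def rees_class_def)
next
  case (Cons z w)
  let ?w = "subst_word (class_rep \<phi>) w"
  have "eval_word M_xtyyx \<phi> (z # w) = \<phi> z \<otimes>\<^bsub>M_xtyyx\<^esub> eval_word M_xtyyx \<phi> w"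
    by (simp add: eval_word_def)
  then have eval_Cons: "eval_word M_xtyyx \<phi> (z # w) = \<phi> z \<otimes>\<^bsub>M_xtyyx\<^esub> rees_class ?w"
    by (simp only: Cons.IH)
  show ?case
  proof (cases "\<phi> z")
    case None
    then have "\<not> xtyyx_factor (subst_word (class_rep \<phi>) (z # w))"
      using xtyyx_factor_letters by (fastforce simp: class_rep_def)
    then show ?thesis
      unfolding eval_Cons None M_xtyyx_mult_None by (simp add: rees_class_def)
  next
    case (Some c)
    with assms have "Some c \<in> carrier M_xtyyx"
      by (metis rangeI subsetD)
    then have "c \<in> gclasses"
      unfolding M_gamma_def by auto
    with Some have \<phi>_z: "\<phi> z = Some (gclass (class_rep \<phi> z))"
      using some_gclass gclass_eq_iff unfolding gclasses_def class_rep_def by auto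
    show ?thesis
    proof (cases "xtyyx_factor ?w")
      case True
      then show ?thesis
        unfolding eval_Cons \<phi>_z rees_class_def[of ?w] if_P[OF True] M_xtyyx_mult_Some by simp
    next
      case False
      then have "\<not> xtyyx_factor (class_rep \<phi> z @ ?w)"
        using xtyyx_factor_appendD by blast
      with False show ?thesis
        unfolding eval_Cons rees_class_def[of ?w] if_not_P[OF False] M_xtyyx_mult_None
        by (simp add: rees_class_def)
    qed
  qed
qed

lemma (in xtyyx_xtxyyx_fails) rees_class_equiv:
  assumes "u \<approx> v"
  shows "rees_class u = rees_class v"
proof (cases "xtyyx_factor u \<or> xtyyx_factor v")
  case True
  then have "gamma_rel u v"
    using xtyyx_factor_isoterm assms equiv_sym gamma_rel_sym by blast
  then show ?thesis
    unfolding rees_class_def using xtyyx_factor_gamma_rel gclass_eq_iff by auto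
qed (auto simp: rees_class_def)

theorem lemma4p2:
  fixes T :: "(word \<times> word) set"
  assumes "equational_theory T"
    and "([0,1,0], [0,1,0,0]) \<in> T"
    and "([0,1,0], [0,0,1,0]) \<in> T"
    and "([0,1,0,1], [1,0,1,0]) \<in> T"
    and "\<not> in_variety (M_gamma {gclass [0,1,2,2,0]}) T"
  shows "([0,1,2,2,0], [0,1,0,2,2,0]) \<in> T"
proof (rule ccontr)
  assume "([0,1,2,2,0], [0,1,0,2,2,0]) \<notin> T"
  with assms(1-4) interpret xtyyx_xtxyyx_fails T
    by unfold_locales
  have "in_variety M_xtyyx T"
    unfolding in_variety_def sat_id_def
  proof (intro ballI allI impI)
    fix uv and \<phi> :: "nat \<Rightarrow> word set option"
    assume "uv \<in> T" "range \<phi> \<subseteq> carrier M_xtyyx"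
    then show "eval_word M_xtyyx \<phi> (fst uv) = eval_word M_xtyyx \<phi> (snd uv)"
      using rees_class_equiv[OF equiv_subst] eval_word_M_xtyyx by (metis prod.collapse)
  qed
  with assms(5) show False
    by contradiction
qed

end
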